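(* Let $m\le n$ and let $r_1,\dots,r_m$ be positive integers with $n=\sum_{i=1}^m r_i$. For a positive integer $r$, let $\mathbf{1}_r$ denote the column vector of length $r$ with all entries $1$. Let $A=(a_{ij})$ be an $m\times m$ real matrix, and let $M$ be an $n\times n$ real matrix whose rows are divided into consecutive blocks of sizes $r_1,\dots,r_m$, whose $j$-th column, for $1\le j\le m$, is the vector $(a_{1j}\mathbf{1}_{r_1}^\top, a_{2j}\mathbf{1}_{r_2}^\top,\dots,a_{mj}\mathbf{1}_{r_m}^\top)^\top$, and whose remaining $n-m$ columns are arbitrary. Let $N$ be the $n\times n$ matrix with the same last $n-m$ columns as $M$, and whose $j$-th column, for $1\le j\le m$, has $\mathbf{1}_{r_j}$ in the $j$-th row block and zeros in all other row blocks. Then $\det(M)=\det(A)\cdot\det(N)$. *)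

theory Defs
  imports "Jordan_Normal_Form.Determinant"
begin

end

theory Submission
  imports Defs
begin

text \<open>The first m columns of M are the columns of N combined by the coefficients of A, and the
  remaining columns agree, so M = N \<cdot> diag(A, I) and the determinant is multiplicative.\<close>

lemma block_index_exists:
  fixes r :: "nat \<Rightarrow> nat"
  assumes "k < (\<Sum>i<m. r i)"
  shows "\<exists>b<m. (\<Sum>i<b. r i) \<le> k \<and> k < (\<Sum>i<Suc b. r i)"
  using assms
proof (induction m)
  case 0
  then show ?case by simp
next
  case (Suc m)
  show ?case
  proof (cases "k < (\<Sum>i<m. r i)")
    case True
    then show ?thesis using Suc.IH less_SucI by blast
  next
    case False
    then show ?thesis using Suc.prems by (intro exI[of _ m]) auto
  qed
qed

definition pad_id_mat :: "'a::zero_neq_one mat \<Rightarrow> nat \<Rightarrow> 'a mat" where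
  "pad_id_mat A k = four_block_mat A (0\<^sub>m (dim_row A) k) (0\<^sub>m k (dim_col A)) (1\<^sub>m k)"

lemma pad_id_mat_carrier:
  "A \<in> carrier_mat m m \<Longrightarrow> pad_id_mat A k \<in> carrier_mat (m + k) (m + k)"
  unfolding pad_id_mat_def by auto

lemma det_pad_id_mat:
  fixes A :: "'a::idom mat"
  assumes "A \<in> carrier_mat m m"
  shows "det (pad_id_mat A k) = det A"
  using assms unfolding pad_id_mat_def
  by (subst det_four_block_mat_upper_right_zero[OF assms]) auto

lemma index_pad_id_mat:
  assumes "A \<in> carrier_mat m m" "l < m + k" "j < m + k"
  shows "pad_id_mat A k $$ (l, j) =
    (if l < m \<and> j < m then A $$ (l, j) else if l = j then 1 else 0)"
  using assms unfolding pad_id_mat_def by (subst index_mat_four_block) auto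

lemma index_mult_pad_id_mat:
  fixes N A :: "'a::comm_ring_1 mat"
  assumes A: "A \<in> carrier_mat m m" and N: "N \<in> carrier_mat n (m + k)"
    and i: "i < n" and j: "j < m + k"
  shows "(N * pad_id_mat A k) $$ (i, j) =
    (if j < m then (\<Sum>l<m. N $$ (i, l) * A $$ (l, j)) else N $$ (i, j))"
proof -
  have "(N * pad_id_mat A k) $$ (i, j) = (\<Sum>l<m + k. N $$ (i, l) * pad_id_mat A k $$ (l, j))"
    using A N i j pad_id_mat_carrier[OF A, of k]
    by (simp add: scalar_prod_def atLeast0LessThan[symmetric])
  also have "\<dots> = (if j < m then (\<Sum>l<m. N $$ (i, l) * A $$ (l, j)) else N $$ (i, j))"
  proof (cases "j < m")
    case True
    have "(\<Sum>l<m + k. N $$ (i, l) * pad_id_mat A k $$ (l, j))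
        = (\<Sum>l<m + k. if l < m then N $$ (i, l) * A $$ (l, j) else 0)"
      using A j True by (intro sum.cong) (auto simp: index_pad_id_mat)
    also have "\<dots> = (\<Sum>l<m. N $$ (i, l) * A $$ (l, j))"
      by (intro sum.mono_neutral_cong_right) auto
    finally show ?thesis using True by simp
  next
    case False
    have "(\<Sum>l<m + k. N $$ (i, l) * pad_id_mat A k $$ (l, j))
        = (\<Sum>l<m + k. if l = j then N $$ (i, j) else 0)"
      using A j False by (intro sum.cong) (auto simp: index_pad_id_mat)
    then show ?thesis using False j by simp
  qed
  finally show ?thesis .
qed

theorem lemma4p5:
  fixes m n :: nat and r :: "nat \<Rightarrow> nat"
    and A M N :: "real mat"
  assumes "m \<le> n"
    and "\<And>i. i < m \<Longrightarrow> r i > 0"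
    and "n = (\<Sum>i<m. r i)"
    and "A \<in> carrier_mat m m"
    and "M \<in> carrier_mat n n"
    and "N \<in> carrier_mat n n"
    and "\<And>k j b. k < n \<Longrightarrow> j < m \<Longrightarrow> b < m \<Longrightarrow>
           (\<Sum>i<b. r i) \<le> k \<Longrightarrow> k < (\<Sum>i<Suc b. r i) \<Longrightarrow>
           M $$ (k, j) = A $$ (b, j)"
    and "\<And>k j b. k < n \<Longrightarrow> j < m \<Longrightarrow> b < m \<Longrightarrow>
           (\<Sum>i<b. r i) \<le> k \<Longrightarrow> k < (\<Sum>i<Suc b. r i) \<Longrightarrow>
           N $$ (k, j) = (if b = j then 1 else 0)"
    and "\<And>k j. k < n \<Longrightarrow> m \<le> j \<Longrightarrow> j < n \<Longrightarrow> N $$ (k, j) = M $$ (k, j)"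
  shows "det M = det A * det N"
proof -
  note m_le_n = assms(1) and A = assms(4) and M = assms(5) and N = assms(6)
    and M_left = assms(7) and N_left = assms(8) and N_right = assms(9)
  define B where "B = pad_id_mat A (n - m)"
  have N_cols: "N \<in> carrier_mat n (m + (n - m))" and B: "B \<in> carrier_mat n n"
    using N pad_id_mat_carrier[OF A, of "n - m"] m_le_n by (simp_all add: B_def)
  have "M = N * B"
  proof (rule eq_matI)
    fix k j assume "k < dim_row (N * B)" "j < dim_col (N * B)"
    then have k: "k < n" and j: "j < n" using N B by auto
    obtain b where b: "b < m" "(\<Sum>i<b. r i) \<le> k" "k < (\<Sum>i<Suc b. r i)"
      using block_index_exists[where k = k and m = m and r = r] k assms(3) by auto
    have "(\<Sum>l<m. N $$ (k, l) * A $$ (l, j)) = (\<Sum>l<m. if b = l then A $$ (l, j) else 0)"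
      using b k N_left by (intro sum.cong) auto
    also have "\<dots> = A $$ (b, j)"
      using b by simp
    finally show "M $$ (k, j) = (N * B) $$ (k, j)"
      using index_mult_pad_id_mat[OF A N_cols k] j m_le_n b k M_left N_right
      by (auto simp: B_def)
  qed (use M N B in auto)
  then show ?thesis
    using det_mult[OF N B] det_pad_id_mat[OF A] by (simp add: B_def)
qed

end
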